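(* Let $n=m=2$ and let $\sigma$ be the preference profile in which each of the two alternatives is ranked first by exactly one of the two voters. If $\mathcal{D}$ is the Beta$(\frac14,1)$ distribution (density $\frac14x^{-3/4}$ on $(0,1)$), then for each alternative $j\in\{1,2\}$, $\mathbb{E}\!\left[\frac{\max_{k\in\{1,2\}}\mathrm{sw}(k,u)}{\mathrm{sw}(j,u)}\right]=\infty$; i.e., no deterministic rule has finite expected inverse distortion at $\sigma$.
   Context: Given $\mathcal{D}$ and a profile $\sigma$ (a ranking of the alternatives for each voter), a random utility profile $u$ consistent with $\sigma$ is generated as follows: independently for each voter $i$, draw $m$ i.i.d. samples from $\mathcal{D}$ and assign them, from highest to lowest, to the alternatives in the order of voter $i$'s ranking. The social welfare of $j$ is $\mathrm{sw}(j,u)=\sum_i u_{ij}$; expectation is over $u$. *)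

theory Defs
  imports "HOL-Probability.Probability"
begin

text \<open>A profile sigma maps each voter i to a list (sigma i) listing the alternatives
  from most preferred to least preferred. A sample point s assigns to each voter i
  and each sample index k < m an i.i.d. draw s (i,k) from the distribution D.\<close>

definition is_ranking :: "nat \<Rightarrow> nat list \<Rightarrow> bool" where
  "is_ranking m r \<longleftrightarrow> distinct r \<and> set r = {0..<m}"

definition is_profile :: "nat \<Rightarrow> nat \<Rightarrow> (nat \<Rightarrow> nat list) \<Rightarrow> bool" where
  "is_profile n m \<sigma> \<longleftrightarrow> (\<forall>i<n. is_ranking m (\<sigma> i))"

definition rank_pos :: "nat list \<Rightarrow> nat \<Rightarrow> nat" where
  "rank_pos r j = (LEAST p. p < length r \<and> r ! p = j)"

text \<open>Utility of voter i for alternative j: the samples of voter i, sorted from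
  highest to lowest, are assigned in the order of voter i's ranking.\<close>
definition util :: "nat \<Rightarrow> (nat \<Rightarrow> nat list) \<Rightarrow> (nat \<times> nat \<Rightarrow> real) \<Rightarrow> nat \<Rightarrow> nat \<Rightarrow> real" where
  "util m \<sigma> s i j = rev (sort (map (\<lambda>k. s (i, k)) [0..<m])) ! rank_pos (\<sigma> i) j"

definition sw :: "nat \<Rightarrow> nat \<Rightarrow> (nat \<Rightarrow> nat list) \<Rightarrow> (nat \<times> nat \<Rightarrow> real) \<Rightarrow> nat \<Rightarrow> real" where
  "sw n m \<sigma> s j = (\<Sum>i<n. util m \<sigma> s i j)"

definition sample_space :: "nat \<Rightarrow> nat \<Rightarrow> real measure \<Rightarrow> (nat \<times> nat \<Rightarrow> real) measure" where
  "sample_space n m D = PiM ({0..<n} \<times> {0..<m}) (\<lambda>_. D)"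

definition exp_inv_distortion :: "nat \<Rightarrow> nat \<Rightarrow> real measure \<Rightarrow> (nat \<Rightarrow> nat list) \<Rightarrow> nat \<Rightarrow> ennreal" where
  "exp_inv_distortion n m D \<sigma> j =
     (\<integral>\<^sup>+ s. ennreal (Max ((\<lambda>k. sw n m \<sigma> s k) ` {0..<m}) / sw n m \<sigma> s j) \<partial>sample_space n m D)"

definition beta_quarter :: "real measure" where
  "beta_quarter = density lborel (\<lambda>x. ennreal (indicator {0<..<1} x * (1/4) * x powr (-3/4)))"

end

theory Submission
  imports Defs
begin

text \<open>Let voter p rank j first and voter q = 1 - p rank j second. On the event that the
  sample s(q,1) lies in (1/2, 1) and the three other samples lie in (0, t^4), alternative j
  has welfare below 2 t^4 while the other alternative has welfare above 1/2, so the inverse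
  distortion exceeds 1/(4 t^4). Since the density x^(-3/4)/4 blows up at 0, the interval
  (0, t^4) has probability at least t/4, so the event has probability at least t^3/512
  and contributes at least 1/(2048 t) to the expectation; letting t tend to 0 gives
  infinity.\<close>

lemma emeasure_density_ge_const:
  assumes "A \<in> sets M" "f \<in> borel_measurable M" "\<And>x. x \<in> A \<Longrightarrow> c \<le> f x"
  shows "c * emeasure M A \<le> emeasure (density M f) A"
proof -
  have "c * emeasure M A = (\<integral>\<^sup>+ x. c * indicator A x \<partial>M)"
    using assms(1) by (simp add: nn_integral_cmult_indicator)
  also have "\<dots> \<le> (\<integral>\<^sup>+ x. f x * indicator A x \<partial>M)"
    using assms(3) by (intro nn_integral_mono) (auto split: split_indicator)
  also have "\<dots> = emeasure (density M f) A"
    using assms(1,2) by (simp add: emeasure_density)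
  finally show ?thesis .
qed

lemma sets_beta_quarter [simp]: "sets beta_quarter = sets borel"
  unfolding beta_quarter_def by simp

lemma sigma_finite_beta_quarter: "sigma_finite_measure beta_quarter"
  unfolding beta_quarter_def
  by (subst sigma_finite_measure.sigma_finite_iff_density_finite[OF sigma_finite_lborel]) auto

lemma emeasure_beta_quarter_ge_const:
  assumes "\<And>x. x \<in> {a<..<b} \<Longrightarrow> c \<le> x powr (-3/4) / 4"
    and "0 \<le> c" "0 \<le> a" "a \<le> b" "b \<le> 1"
  shows "ennreal (c * (b - a)) \<le> emeasure beta_quarter {a<..<b}"
proof -
  have "ennreal (c * (b - a)) = ennreal c * emeasure lborel {a<..<b}"
    using assms(2,4) by (simp add: ennreal_mult)
  also have "\<dots> \<le> emeasure beta_quarter {a<..<b}"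
    unfolding beta_quarter_def
    using assms(1,3,5) by (intro emeasure_density_ge_const ennreal_leI) auto
  finally show ?thesis .
qed

lemma emeasure_beta_quarter_near_zero:
  assumes "0 < t" "t \<le> 1"
  shows "ennreal (t / 4) \<le> emeasure beta_quarter {0<..<t ^ 4}"
proof -
  have "(t ^ 4) powr (-3/4) = (t powr 4) powr (-3/4)"
    using assms(1) by (simp add: powr_numeral)
  also have "\<dots> = t powr (- 3)" by (simp add: powr_powr)
  also have "\<dots> = 1 / t ^ 3"
    using assms(1) by (simp add: powr_minus_divide powr_numeral)
  finally have "(t ^ 4) powr (-3/4) = 1 / t ^ 3" .
  then have density_bound: "1 / (4 * t ^ 3) \<le> x powr (-3/4) / 4" if "x \<in> {0<..<t ^ 4}" for x
    using that powr_mono2'[of "-3/4" x "t ^ 4"] by auto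
  have "ennreal (t / 4) = ennreal (1 / (4 * t ^ 3) * (t ^ 4 - 0))"
    using assms(1) by (intro arg_cong[where f = ennreal]) (simp add: power_eq_if)
  also have "\<dots> \<le> emeasure beta_quarter {0<..<t ^ 4}"
    using assms by (intro emeasure_beta_quarter_ge_const density_bound) (auto simp: power_le_one)
  finally show ?thesis .
qed

lemma emeasure_beta_quarter_upper_half: "ennreal (1/8) \<le> emeasure beta_quarter {1/2<..<1}"
proof -
  have "1/4 \<le> x powr (-3/4) / 4" if "x \<in> {1/2<..<1}" for x :: real
    using that powr_mono2'[of "-3/4" x 1] by auto
  from emeasure_beta_quarter_ge_const[of "1/2" 1 "1/4", OF this] show ?thesis by simp
qed

lemma emeasure_sample_space_PiE:
  assumes "sigma_finite_measure D" "\<And>ik. ik \<in> {0..<n} \<times> {0..<m} \<Longrightarrow> A ik \<in> sets D"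
  shows "emeasure (sample_space n m D) (Pi\<^sub>E ({0..<n} \<times> {0..<m}) A)
           = (\<Prod>ik\<in>{0..<n} \<times> {0..<m}. emeasure D (A ik))"
proof -
  interpret product_sigma_finite "\<lambda>_. D"
    using assms(1) by (simp add: product_sigma_finite_def)
  show ?thesis
    unfolding sample_space_def using assms(2) by (intro emeasure_PiM) auto
qed

lemma is_ranking_2: "is_ranking 2 r \<Longrightarrow> r = [0, 1] \<or> r = [1, 0]"
proof -
  assume "is_ranking 2 r"
  then have "distinct r" and set_r: "set r = {0..<2}" by (auto simp: is_ranking_def)
  then have "length r = 2" using distinct_card by fastforce
  then obtain x y where r: "r = [x, y]"
    by (auto simp: numeral_2_eq_2 length_Suc_conv)
  then have "x < 2" "y < 2" "x \<noteq> y" using set_r \<open>distinct r\<close> by auto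
  then show ?thesis using r by auto
qed

lemma opposite_rankings_2:
  assumes "is_profile 2 2 \<sigma>" "\<forall>a<2. card {i. i < 2 \<and> hd (\<sigma> i) = a} = 1" "j < (2::nat)"
  obtains p where "p < 2" "\<sigma> p = [j, 1 - j]" "\<sigma> (1 - p) = [1 - j, j]"
proof -
  have rankings: "\<sigma> i = [0, 1] \<or> \<sigma> i = [1, 0]" if "i < 2" for i
    using assms(1) that is_ranking_2 unfolding is_profile_def by auto
  have "card {i. i < 2 \<and> hd (\<sigma> i) = j} = 1" using assms(2,3) by blast
  then obtain p where p: "{i. i < 2 \<and> hd (\<sigma> i) = j} = {p}"
    by (auto simp: card_1_singleton_iff)
  then have "p < 2" "hd (\<sigma> p) = j" by auto
  moreover have "1 - p < 2" "1 - p \<noteq> p" using \<open>p < 2\<close> by arith+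
  moreover from this p have "hd (\<sigma> (1 - p)) \<noteq> j" by blast
  moreover have "j = 0 \<or> j = 1" using assms(3) by arith
  ultimately have "\<sigma> p = [j, 1 - j]" "\<sigma> (1 - p) = [1 - j, j]"
    using rankings[of p] rankings[of "1 - p"] by auto
  with \<open>p < 2\<close> show ?thesis by (rule that)
qed

lemma rank_pos_2:
  assumes "a \<noteq> b"
  shows "rank_pos [a, b] a = 0" "rank_pos [a, b] b = 1"
proof -
  show "rank_pos [a, b] a = 0"
    unfolding rank_pos_def by (rule Least_eq_0) simp
  show "rank_pos [a, b] b = 1"
    unfolding rank_pos_def
  proof (rule Least_equality)
    fix y assume "y < length [a, b] \<and> [a, b] ! y = b"
    with assms show "1 \<le> y" by (cases y) auto
  qed simp
qed

lemma util_2: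
  assumes "\<sigma> i = [a, b]" "a \<noteq> b"
  shows "util 2 \<sigma> s i a = max (s (i, 0)) (s (i, 1))"
    and "util 2 \<sigma> s i b = min (s (i, 0)) (s (i, 1))"
proof -
  have "rev (sort [x, y]) = [max x y, min x y]" for x y :: real
    by (cases "x \<le> y") auto
  then show "util 2 \<sigma> s i a = max (s (i, 0)) (s (i, 1))"
    and "util 2 \<sigma> s i b = min (s (i, 0)) (s (i, 1))"
    using assms by (simp_all add: util_def rank_pos_2 upt_rec)
qed

lemma sw_2: "p < 2 \<Longrightarrow> sw 2 m \<sigma> s k = util m \<sigma> s p k + util m \<sigma> s (1 - p) k"
  unfolding sw_def by (cases p) (auto simp: numeral_2_eq_2)

lemma inv_distortion_ge_on_event:
  assumes "p < 2" "j < 2" "\<sigma> p = [j, 1 - j]" "\<sigma> (1 - p) = [1 - j, j]"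
    and "s (p, 0) \<in> {0<..<\<delta>}" "s (p, 1) \<in> {0<..<\<delta>}" "s (1 - p, 0) \<in> {0<..<\<delta>}"
    and "s (1 - p, 1) > 1/2"
  shows "1 / (4 * \<delta>) \<le> Max ((\<lambda>k. sw 2 2 \<sigma> s k) ` {0..<2}) / sw 2 2 \<sigma> s j"
proof -
  have "j \<noteq> 1 - j" using assms(2) by arith
  then have sw_j: "sw 2 2 \<sigma> s j = max (s (p, 0)) (s (p, 1)) + min (s (1 - p, 0)) (s (1 - p, 1))"
    and sw_other: "sw 2 2 \<sigma> s (1 - j) = min (s (p, 0)) (s (p, 1)) + max (s (1 - p, 0)) (s (1 - p, 1))"
    using assms(3,4) by (simp_all add: sw_2[OF assms(1)] util_2)
  have j_small: "0 < sw 2 2 \<sigma> s j" "sw 2 2 \<sigma> s j \<le> 2 * \<delta>"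
    unfolding sw_j using assms(5-8) by auto
  have "1/2 \<le> sw 2 2 \<sigma> s (1 - j)"
    unfolding sw_other using assms(5,6,8) by auto
  also have "\<dots> \<le> Max ((\<lambda>k. sw 2 2 \<sigma> s k) ` {0..<2})"
    by (rule Max_ge) auto
  finally have max_large: "1/2 \<le> Max ((\<lambda>k. sw 2 2 \<sigma> s k) ` {0..<2})" .
  have "1 / (4 * \<delta>) = (1/2) / (2 * \<delta>)" by simp
  also have "\<dots> \<le> (1/2) / sw 2 2 \<sigma> s j"
    using j_small by (intro divide_left_mono) auto
  also have "\<dots> \<le> Max ((\<lambda>k. sw 2 2 \<sigma> s k) ` {0..<2}) / sw 2 2 \<sigma> s j"
    using j_small max_large by (intro divide_right_mono) auto
  finally show ?thesis .
qed

lemma exp_inv_distortion_ge: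
  assumes "p < 2" "j < 2" "\<sigma> p = [j, 1 - j]" "\<sigma> (1 - p) = [1 - j, j]"
    and "0 < t" "t \<le> 1"
  shows "ennreal (1 / (2048 * t)) \<le> exp_inv_distortion 2 2 beta_quarter \<sigma> j"
proof -
  define I where "I = {0..<2::nat} \<times> {0..<2::nat}"
  define A where "A ik = (if ik = (1 - p, 1::nat) then {1/2<..<1} else {0<..<t ^ 4})" for ik
  define inv_dist where
    "inv_dist s = ennreal (Max ((\<lambda>k. sw 2 2 \<sigma> s k) ` {0..<2}) / sw 2 2 \<sigma> s j)" for s
  have event_sets: "Pi\<^sub>E I A \<in> sets (sample_space 2 2 beta_quarter)"
    unfolding sample_space_def I_def by (rule sets_PiM_I_finite) (auto simp: A_def)
  have "(\<Prod>ik\<in>I. emeasure beta_quarter (A ik))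
          = emeasure beta_quarter {0<..<t ^ 4} ^ 3 * emeasure beta_quarter {1/2<..<1}"
    using assms(1) less_2_cases
    by (auto simp: I_def A_def numeral_2_eq_2 atLeast0_lessThan_Suc power3_eq_cube mult_ac)
  then have event_prob:
    "emeasure (sample_space 2 2 beta_quarter) (Pi\<^sub>E I A)
       = emeasure beta_quarter {0<..<t ^ 4} ^ 3 * emeasure beta_quarter {1/2<..<1}"
    unfolding I_def
    by (subst emeasure_sample_space_PiE[OF sigma_finite_beta_quarter]) (auto simp: A_def)
  have on_event: "ennreal (1 / (4 * t ^ 4)) * indicator (Pi\<^sub>E I A) s \<le> inv_dist s" for s
  proof (cases "s \<in> Pi\<^sub>E I A")
    case True
    have in_A: "s ik \<in> A ik" if "ik \<in> I" for ik using True that by (auto simp: PiE_iff)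
    have "p \<noteq> 1 - p" "1 - p < 2" using assms(1) by arith+
    then have "s (p, 0) \<in> {0<..<t ^ 4}" "s (p, 1) \<in> {0<..<t ^ 4}" "s (1 - p, 0) \<in> {0<..<t ^ 4}"
        "s (1 - p, 1) \<in> {1/2<..<1}"
      using assms(1) in_A[of "(p, 0)"] in_A[of "(p, 1)"] in_A[of "(1 - p, 0)"] in_A[of "(1 - p, 1)"]
      by (auto simp: I_def A_def)
    then have "1 / (4 * t ^ 4) \<le> Max ((\<lambda>k. sw 2 2 \<sigma> s k) ` {0..<2}) / sw 2 2 \<sigma> s j"
      by (intro inv_distortion_ge_on_event[OF assms(1-4)]) auto
    then show ?thesis using True by (simp add: inv_dist_def ennreal_leI)
  qed (simp add: inv_dist_def)
  have "ennreal (1 / (2048 * t)) = ennreal (1 / (4 * t ^ 4)) * (ennreal (t / 4) ^ 3 * ennreal (1/8))"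
    using assms(5) by (simp add: ennreal_power ennreal_mult''[symmetric] power_eq_if field_simps)
  also have "\<dots> \<le> ennreal (1 / (4 * t ^ 4)) * emeasure (sample_space 2 2 beta_quarter) (Pi\<^sub>E I A)"
    unfolding event_prob using emeasure_beta_quarter_near_zero[OF assms(5,6)]
      emeasure_beta_quarter_upper_half by (intro mult_left_mono mult_mono power_mono) auto
  also have "\<dots> = (\<integral>\<^sup>+ s. ennreal (1 / (4 * t ^ 4)) * indicator (Pi\<^sub>E I A) s \<partial>sample_space 2 2 beta_quarter)"
    using event_sets by (rule nn_integral_cmult_indicator[symmetric])
  also have "\<dots> \<le> (\<integral>\<^sup>+ s. inv_dist s \<partial>sample_space 2 2 beta_quarter)"
    by (intro nn_integral_mono on_event)
  finally show ?thesis by (simp add: exp_inv_distortion_def inv_dist_def)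
qed

theorem lemma2:
  fixes \<sigma> :: "nat \<Rightarrow> nat list" and j :: nat
  assumes "is_profile 2 2 \<sigma>"
    and "\<forall>a<2. card {i. i < 2 \<and> hd (\<sigma> i) = a} = 1"
    and "j < 2"
  shows "exp_inv_distortion 2 2 beta_quarter \<sigma> j = \<infinity>"
proof (rule ccontr)
  obtain p where p: "p < 2" "\<sigma> p = [j, 1 - j]" "\<sigma> (1 - p) = [1 - j, j]"
    by (rule opposite_rankings_2[OF assms])
  assume "exp_inv_distortion 2 2 beta_quarter \<sigma> j \<noteq> \<infinity>"
  then obtain r where r: "exp_inv_distortion 2 2 beta_quarter \<sigma> j = ennreal r" "0 \<le> r"
    by (cases "exp_inv_distortion 2 2 beta_quarter \<sigma> j") auto
  define t where "t = 1 / (2048 * (r + 1))"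
  have "0 < t" "t \<le> 1" using r(2) by (simp_all add: t_def field_simps)
  from exp_inv_distortion_ge[OF p(1) assms(3) p(2,3) this]
  have "1 / (2048 * t) \<le> r" using r by (simp add: ennreal_le_iff)
  moreover have "1 / (2048 * t) = r + 1" using r(2) by (simp add: t_def)
  ultimately show False by simp
qed

end
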